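(* Let $X$ be a compact metric space and $f\colon X\to X$ continuous. If $(X,f)$ has $\gamma$-restricted two-sided orbital limit shadowing, then $ICT_f\subseteq\gamma_f$.
   Context: A full trajectory is $\langle z_i\rangle_{i\in\mathbb Z}$ with $f(z_i)=z_{i+1}$. For two-sided sequences, $\omega(\langle x_i\rangle)=\bigcap_{M}\overline{\{x_n:n>M\}}$, $\alpha(\langle x_i\rangle)=\bigcap_M\overline{\{x_n:n<-M\}}$; for $x\in X$, $\omega(x)$ is the set of accumulation points of $x,f(x),f^2(x),\dots$. A two-sided asymptotic pseudo-orbit is $\langle x_i\rangle_{i\in\mathbb Z}$ with $d(f(x_i),x_{i+1})\to0$ as $i\to\pm\infty$. $\gamma$-restricted two-sided orbital limit shadowing: for every two-sided asymptotic pseudo-orbit $\langle x_i\rangle$ with $\alpha(\langle x_i\rangle)=\omega(\langle x_i\rangle)$ there is a full trajectory $\langle z_i\rangle$ with $\alpha(\langle z_i\rangle)=\alpha(\langle x_i\rangle)$ and $\omega(\langle z_i\rangle)=\omega(\langle x_i\rangle)$. $ICT_f$ is the set of nonempty closed internally chain transitive sets ($A$ is internally chain transitive if for all $a,b\in A$ and $\delta>0$ there exist $x_0=a,\dots,x_N=b$ in $A$, $N\ge1$, with $d(f(x_i),x_{i+1})<\delta$). The $\gamma$-limit set $\gamma(x)$ of $x\in X$: $y\in\gamma(x)$ iff $y\in\omega(x)$ and there exist a sequence $\langle y_i\rangle_{i\ge1}$ in $X$ and a strictly increasing sequence $\langle n_i\rangle$ in $\mathbb N$ with $f^{n_i}(y_i)=x$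 for each $i$ and $y_i\to y$. $\gamma_f=\{\gamma(x):x\in X\}$. *)

theory Defs
  imports "HOL-Analysis.Analysis"
begin

text \<open>The compact metric space is a compact set X in a metric-space type; f maps X into X.
  All notions are relativised to X.\<close>

definition full_trajectory :: "'a set \<Rightarrow> ('a \<Rightarrow> 'a) \<Rightarrow> (int \<Rightarrow> 'a) \<Rightarrow> bool" where
  "full_trajectory X f z \<longleftrightarrow> (\<forall>i. z i \<in> X \<and> f (z i) = z (i + 1))"

definition omega_seq :: "(int \<Rightarrow> 'a::topological_space) \<Rightarrow> 'a set" where
  "omega_seq x = (\<Inter>M. closure {x n | n. n > M})"

definition alpha_seq :: "(int \<Rightarrow> 'a::topological_space) \<Rightarrow> 'a set" where
  "alpha_seq x = (\<Inter>M. closure {x n | n. n < - M})"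

definition two_sided_asym_pseudo_orbit :: "'a set \<Rightarrow> ('a \<Rightarrow> 'a) \<Rightarrow> (int \<Rightarrow> 'a::metric_space) \<Rightarrow> bool" where
  "two_sided_asym_pseudo_orbit X f x \<longleftrightarrow>
     (\<forall>i. x i \<in> X) \<and>
     ((\<lambda>i. dist (f (x i)) (x (i + 1))) \<longlongrightarrow> 0) at_top \<and>
     ((\<lambda>i. dist (f (x i)) (x (i + 1))) \<longlongrightarrow> 0) at_bot"

definition gamma_restricted_two_sided_orbital_limit_shadowing ::
  "'a::metric_space set \<Rightarrow> ('a \<Rightarrow> 'a) \<Rightarrow> bool" where
  "gamma_restricted_two_sided_orbital_limit_shadowing X f \<longleftrightarrow>
     (\<forall>x::int \<Rightarrow> 'a. two_sided_asym_pseudo_orbit X f x \<and> alpha_seq x = omega_seq x \<longrightarrow>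
        (\<exists>z. full_trajectory X f z \<and> alpha_seq z = alpha_seq x \<and> omega_seq z = omega_seq x))"

definition internally_chain_transitive :: "'a set \<Rightarrow> ('a \<Rightarrow> 'a) \<Rightarrow> 'a::metric_space set \<Rightarrow> bool" where
  "internally_chain_transitive X f A \<longleftrightarrow>
     (\<forall>a\<in>A. \<forall>b\<in>A. \<forall>\<delta>>0. \<exists>N::nat. N \<ge> 1 \<and> (\<exists>x::nat \<Rightarrow> 'a.
        x 0 = a \<and> x N = b \<and> (\<forall>i\<le>N. x i \<in> A) \<and> (\<forall>i<N. dist (f (x i)) (x (Suc i)) < \<delta>)))"

definition ICT :: "'a set \<Rightarrow> ('a \<Rightarrow> 'a) \<Rightarrow> 'a::metric_space set set" where
  "ICT X f = {A. A \<subseteq> X \<and> A \<noteq> {} \<and> closed A \<and> internally_chain_transitive X f A}"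

definition omega_pt :: "('a \<Rightarrow> 'a) \<Rightarrow> 'a \<Rightarrow> 'a::topological_space set" where
  "omega_pt f x = (\<Inter>M. closure {(f ^^ n) x | n. n \<ge> M})"

definition gamma_pt :: "'a set \<Rightarrow> ('a \<Rightarrow> 'a) \<Rightarrow> 'a \<Rightarrow> 'a::metric_space set" where
  "gamma_pt X f x = {y. y \<in> omega_pt f x \<and>
      (\<exists>ys::nat \<Rightarrow> 'a. \<exists>ns::nat \<Rightarrow> nat. strict_mono ns \<and>
         (\<forall>i. ys i \<in> X \<and> (f ^^ ns i) (ys i) = x) \<and> ys \<longlonglongrightarrow> y)}"

definition gamma_sets :: "'a set \<Rightarrow> ('a \<Rightarrow> 'a) \<Rightarrow> 'a::metric_space set set" where
  "gamma_sets X f = {gamma_pt X f x | x. x \<in> X}"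

end

(*
  Let A be a closed internally chain transitive set. Concatenating delta-chains in A with
  delta tending to 0, through a sequence that comes back to every point of a countable dense
  subset of A infinitely often, gives a forward asymptotic pseudo-orbit whose omega-limit set
  is A; doing the same with reversed chains gives a backward one, and gluing the two at a
  common point yields a two-sided asymptotic pseudo-orbit with alpha- and omega-limit set A.
  Shadowing provides a full trajectory z with alpha(z) = omega(z) = A. Then omega(z 0) = A,
  and every point of A = alpha(z) is a limit of points z(-n_i), which are n_i-th preimages
  of z 0; hence gamma(z 0) = A.
*)
theory Submission
  imports Defs
begin

text \<open>\<open>err u v\<close> is the error of the step from \<open>u\<close> to \<open>v\<close>: \<open>dist (f u) v\<close> for chains
  of \<open>f\<close>, \<open>dist (f v) u\<close> for chains of \<open>f\<close> read backwards.\<close>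

definition delta_chain :: "('a \<Rightarrow> 'a \<Rightarrow> real) \<Rightarrow> real \<Rightarrow> 'a set \<Rightarrow> 'a \<Rightarrow> 'a \<Rightarrow> bool" where
  "delta_chain err \<delta> A a b \<longleftrightarrow>
     (\<exists>N\<ge>1. \<exists>c. c 0 = a \<and> c N = b \<and> (\<forall>i\<le>N. c i \<in> A) \<and> (\<forall>i<N. err (c i) (c (Suc i)) < \<delta>))"

lemma internally_chain_transitive_iff_delta_chain:
  "internally_chain_transitive X f A \<longleftrightarrow>
     (\<forall>a\<in>A. \<forall>b\<in>A. \<forall>\<delta>>0. delta_chain (\<lambda>u v. dist (f u) v) \<delta> A a b)"
  unfolding internally_chain_transitive_def delta_chain_def by blast

lemma delta_chain_reverse:
  assumes "delta_chain err \<delta> A a b"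
  shows "delta_chain (\<lambda>u v. err v u) \<delta> A b a"
proof -
  obtain N c where N: "N \<ge> 1" "c 0 = a" "c N = b" "\<forall>i\<le>N. c i \<in> A"
    and steps: "\<forall>i<N. err (c i) (c (Suc i)) < \<delta>"
    using assms unfolding delta_chain_def by blast
  have "err (c (N - Suc i)) (c (N - i)) < \<delta>" if "i < N" for i
    using steps[rule_format, of "N - Suc i"] that by (simp add: Suc_diff_Suc)
  then show ?thesis
    unfolding delta_chain_def using N by (intro exI[of _ N] conjI exI[of _ "\<lambda>i. c (N - i)"]) auto
qed

text \<open>\<open>block_walk N n = (k, j)\<close>: the \<open>n\<close>-th entry of the concatenation of blocks of
  lengths \<open>N 0, N 1, \<dots>\<close> is entry \<open>j\<close> of block \<open>k\<close>.\<close>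

fun block_walk :: "(nat \<Rightarrow> nat) \<Rightarrow> nat \<Rightarrow> nat \<times> nat" where
  "block_walk N 0 = (0, 0)"
| "block_walk N (Suc n) =
     (let (k, j) = block_walk N n in if Suc j < N k then (k, Suc j) else (Suc k, 0))"

lemma block_walk_Suc_within:
  "Suc (snd (block_walk N n)) < N (fst (block_walk N n)) \<Longrightarrow>
     block_walk N (Suc n) = (fst (block_walk N n), Suc (snd (block_walk N n)))"
  by (simp add: split_beta)

lemma block_walk_Suc_next:
  "\<not> Suc (snd (block_walk N n)) < N (fst (block_walk N n)) \<Longrightarrow>
     block_walk N (Suc n) = (Suc (fst (block_walk N n)), 0)"
  by (simp add: split_beta)

lemma block_walk_snd_less:
  assumes "\<And>k. 0 < N k"
  shows "snd (block_walk N n) < N (fst (block_walk N n))"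
  by (induction n) (auto simp: split_beta assms)

lemma block_walk_fst_le: "fst (block_walk N n) \<le> n"
  by (induction n) (auto simp: split_beta)

lemma mono_block_walk_fst: "mono (\<lambda>n. fst (block_walk N n))"
  by (rule incseq_SucI) (simp add: split_beta)

lemma block_walk_reaches_block_start:
  assumes "\<And>k. 0 < N k"
  shows "\<exists>n. block_walk N n = (k, 0)"
proof (induction k)
  case 0
  have "block_walk N 0 = (0, 0)" by simp
  then show ?case by blast
next
  case (Suc k)
  then obtain n where n: "block_walk N n = (k, 0)" by blast
  have walk: "block_walk N (n + j) = (k, j)" if "j < N k" for j
    using that by (induction j) (auto simp: n split_beta)
  obtain j where j: "N k = Suc j" using assms[of k] gr0_implies_Suc by blast
  then have "block_walk N (Suc (n + j)) = (Suc k, 0)"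
    using walk[of j] by (simp add: split_beta)
  then show ?case by blast
qed

lemma filterlim_block_walk_fst:
  assumes "\<And>k. 0 < N k"
  shows "filterlim (\<lambda>n. fst (block_walk N n)) at_top sequentially"
  unfolding filterlim_at_top eventually_sequentially
proof
  fix k
  obtain n where "block_walk N n = (k, 0)" using block_walk_reaches_block_start[of N k] assms by blast
  then show "\<exists>n. \<forall>m\<ge>n. k \<le> fst (block_walk N m)"
    using mono_block_walk_fst[of N] by (metis fst_conv monoD)
qed

lemma asymptotic_chain_visiting:
  fixes err :: "'a \<Rightarrow> 'a \<Rightarrow> real" and p :: "nat \<Rightarrow> 'a"
  assumes chains: "\<And>a b \<delta>. a \<in> A \<Longrightarrow> b \<in> A \<Longrightarrow> \<delta> > 0 \<Longrightarrow> delta_chain err \<delta> A a b"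
    and err_nonneg: "\<And>u v. 0 \<le> err u v"
    and p: "range p \<subseteq> A"
  obtains y where "range y \<subseteq> A" "y 0 = p 0" "(\<lambda>n. err (y n) (y (Suc n))) \<longlonglongrightarrow> 0"
    "\<And>k. \<exists>n\<ge>k. y n = p k"
proof -
  have "\<forall>k. delta_chain err (inverse (real (Suc k))) A (p k) (p (Suc k))"
    using chains p by (simp add: range_subsetD)
  then obtain N c where N: "\<And>k. 0 < N k"
    and c: "\<And>k. c k 0 = p k" "\<And>k. c k (N k) = p (Suc k)" "\<And>k i. i \<le> N k \<Longrightarrow> c k i \<in> A"
    and steps: "\<And>k i. i < N k \<Longrightarrow> err (c k i) (c k (Suc i)) < inverse (real (Suc k))"
    unfolding delta_chain_def by (metis less_le_trans zero_less_one)
  define blk where "blk n = fst (block_walk N n)" for n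
  define pos where "pos n = snd (block_walk N n)" for n
  define y where "y n = c (blk n) (pos n)" for n
  have pos_less: "pos n < N (blk n)" for n
    unfolding pos_def blk_def using block_walk_snd_less N by blast
  have y_Suc: "y (Suc n) = c (blk n) (Suc (pos n))" for n
  proof (cases "Suc (pos n) < N (blk n)")
    case True
    then show ?thesis
      unfolding y_def blk_def pos_def by (simp add: block_walk_Suc_within del: block_walk.simps)
  next
    case False
    then have "Suc (pos n) = N (blk n)" using pos_less[of n] by simp
    then show ?thesis
      using False c unfolding y_def blk_def pos_def
      by (simp add: block_walk_Suc_next del: block_walk.simps)
  qed
  have err_le: "err (y n) (y (Suc n)) \<le> inverse (real (Suc (blk n)))" for n
    using steps[OF pos_less[of n]] y_Suc[of n] unfolding y_def by simp
  have blk_lim: "(\<lambda>n. inverse (real (Suc (blk n)))) \<longlonglongrightarrow> 0"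
    using filterlim_compose[OF LIMSEQ_inverse_real_of_nat filterlim_block_walk_fst[OF N]]
    unfolding blk_def .
  have "(\<lambda>n. err (y n) (y (Suc n))) \<longlonglongrightarrow> 0"
    by (rule tendsto_sandwich[OF _ _ tendsto_const blk_lim]) (intro always_eventually allI err_nonneg err_le)+
  moreover have "\<exists>n\<ge>k. y n = p k" for k
  proof -
    obtain n where n: "block_walk N n = (k, 0)"
      using block_walk_reaches_block_start[of N k] N by blast
    then have "k \<le> n" using block_walk_fst_le[of N n] by simp
    with n show ?thesis unfolding y_def blk_def pos_def using c by auto
  qed
  moreover have "range y \<subseteq> A"
    using c(3) pos_less unfolding y_def by (meson image_subsetI less_imp_le)
  moreover have "y 0 = p 0" unfolding y_def blk_def pos_def using c by simp
  ultimately show thesis using that by blast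
qed

definition omega_limit :: "(nat \<Rightarrow> 'a::topological_space) \<Rightarrow> 'a set" where
  "omega_limit g = (\<Inter>M. closure (g ` {M..}))"

lemma Inter_closure_subset_cofinal:
  assumes "\<And>i. \<exists>j. B j \<subseteq> C i"
  shows "(\<Inter>j. closure (B j)) \<subseteq> (\<Inter>i. closure (C i))"
proof (rule INT_greatest)
  fix i
  obtain j where "B j \<subseteq> C i" using assms by blast
  then show "(\<Inter>j. closure (B j)) \<subseteq> closure (C i)"
    by (meson INT_lower closure_mono order_trans UNIV_I)
qed

lemma omega_pt_eq_omega_limit: "omega_pt f x = omega_limit (\<lambda>n. (f ^^ n) x)"
  unfolding omega_pt_def omega_limit_def by (simp add: setcompr_eq_image atLeast_def)

lemma omega_seq_eq_omega_limit: "omega_seq x = omega_limit (\<lambda>n. x (int n))"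
  unfolding omega_seq_def omega_limit_def
proof (intro equalityI Inter_closure_subset_cofinal)
  fix M :: nat
  have "{x n | n. n > int M} \<subseteq> (\<lambda>n. x (int n)) ` {M..}"
  proof
    fix u assume "u \<in> {x n | n. n > int M}"
    then obtain n where "u = x n" "n > int M" by blast
    then show "u \<in> (\<lambda>n. x (int n)) ` {M..}" by (intro image_eqI[of _ _ "nat n"]) auto
  qed
  then show "\<exists>j. {x n | n. n > j} \<subseteq> (\<lambda>n. x (int n)) ` {M..}" by blast
next
  fix M :: int
  have "(\<lambda>n. x (int n)) ` {nat (M + 1)..} \<subseteq> {x n | n. n > M}" by auto
  then show "\<exists>j. (\<lambda>n. x (int n)) ` {j..} \<subseteq> {x n | n. n > M}" by blast
qed

lemma alpha_seq_eq_omega_limit: "alpha_seq x = omega_limit (\<lambda>n. x (- int n))"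
  unfolding alpha_seq_def omega_limit_def
proof (intro equalityI Inter_closure_subset_cofinal)
  fix M :: nat
  have "{x n | n. n < - int M} \<subseteq> (\<lambda>n. x (- int n)) ` {M..}"
  proof
    fix u assume "u \<in> {x n | n. n < - int M}"
    then obtain n where "u = x n" "n < - int M" by blast
    then show "u \<in> (\<lambda>n. x (- int n)) ` {M..}" by (intro image_eqI[of _ _ "nat (- n)"]) auto
  qed
  then show "\<exists>j. {x n | n. n < - j} \<subseteq> (\<lambda>n. x (- int n)) ` {M..}" by blast
next
  fix M :: int
  have "(\<lambda>n. x (- int n)) ` {nat (M + 1)..} \<subseteq> {x n | n. n < - M}" by auto
  then show "\<exists>j. (\<lambda>n. x (- int n)) ` {j..} \<subseteq> {x n | n. n < - M}" by blast
qed

lemma mem_omega_limit_iff: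
  fixes g :: "nat \<Rightarrow> 'a::metric_space"
  shows "a \<in> omega_limit g \<longleftrightarrow> (\<forall>e>0. \<forall>M. \<exists>n\<ge>M. dist (g n) a < e)"
proof -
  have "a \<in> closure (g ` {M..}) \<longleftrightarrow> (\<forall>e>0. \<exists>n\<ge>M. dist (g n) a < e)" for M
    by (simp add: closure_approachable Bex_def)
  then show ?thesis unfolding omega_limit_def by auto
qed

lemma omega_limit_subset:
  assumes "range g \<subseteq> A" "closed A"
  shows "omega_limit g \<subseteq> A"
proof -
  have "omega_limit g \<subseteq> closure (g ` {0..})" unfolding omega_limit_def by blast
  also have "\<dots> \<subseteq> A" using assms by (intro closure_minimal) auto
  finally show ?thesis .
qed

lemma omega_limit_subset_if_visits:
  fixes p y :: "nat \<Rightarrow> 'a::metric_space"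
  assumes "\<And>k. \<exists>n\<ge>k. y n = p k"
  shows "omega_limit p \<subseteq> omega_limit y"
proof
  fix a assume "a \<in> omega_limit p"
  show "a \<in> omega_limit y" unfolding mem_omega_limit_iff
  proof (intro allI impI)
    fix e :: real and M assume "e > 0"
    then obtain k where "k \<ge> M" "dist (p k) a < e"
      using \<open>a \<in> omega_limit p\<close> unfolding mem_omega_limit_iff by blast
    moreover obtain n where "n \<ge> k" "y n = p k" using assms by blast
    ultimately show "\<exists>n\<ge>M. dist (y n) a < e" by (metis order_trans)
  qed
qed

lemma omega_limit_convergent_subseq:
  fixes g :: "nat \<Rightarrow> 'a::metric_space"
  assumes "a \<in> omega_limit g"
  obtains r where "strict_mono r" "(g \<circ> r) \<longlonglongrightarrow> a"
proof -
  have "\<forall>M k. \<exists>n\<ge>M. dist (g n) a < inverse (real (Suc k))"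
    using assms unfolding mem_omega_limit_iff by simp
  then obtain F where F: "\<And>M k. F M k \<ge> M" "\<And>M k. dist (g (F M k)) a < inverse (real (Suc k))"
    by metis
  define r where "r = rec_nat (F 0 0) (\<lambda>i n. F (Suc n) (Suc i))"
  have r_Suc: "r (Suc i) = F (Suc (r i)) (Suc i)" for i unfolding r_def by simp
  have mono: "strict_mono r" unfolding strict_mono_Suc_iff
  proof
    fix i show "r i < r (Suc i)" using F(1)[of "Suc (r i)" "Suc i"] by (simp add: r_Suc)
  qed
  have dist_less: "dist (g (r i)) a < inverse (real (Suc i))" for i
  proof (cases i)
    case 0
    then show ?thesis using F(2)[of 0 0] by (simp add: r_def)
  next
    case (Suc j)
    then show ?thesis using F(2) by (simp only: r_Suc)
  qed
  then have dist_le: "dist ((g \<circ> r) i) a \<le> inverse (real (Suc i))" for i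
    by (simp add: less_imp_le)
  have "(\<lambda>i. dist ((g \<circ> r) i) a) \<longlonglongrightarrow> 0"
    by (rule tendsto_sandwich[OF _ _ tendsto_const LIMSEQ_inverse_real_of_nat])
      (intro always_eventually allI zero_le_dist dist_le)+
  then have "(g \<circ> r) \<longlonglongrightarrow> a" by (rule tendsto_dist_iff[THEN iffD2])
  with mono show thesis by (rule that)
qed

lemma compact_imp_separable:
  fixes S :: "'a::metric_space set"
  assumes "compact S"
  obtains D where "countable D" "D \<subseteq> S" "S \<subseteq> closure D"
proof -
  have "\<exists>K. finite K \<and> K \<subseteq> S \<and> S \<subseteq> (\<Union>x\<in>K. ball x (inverse (real (Suc m))))" for m
    using seq_compact_imp_totally_bounded[OF compact_imp_seq_compact[OF assms]] by simp
  then obtain K where K: "\<And>m. finite (K m)" "\<And>m. K m \<subseteq> S"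
    and cover: "\<And>m. S \<subseteq> (\<Union>x\<in>K m. ball x (inverse (real (Suc m))))"
    by metis
  have "S \<subseteq> closure (\<Union>m. K m)"
  proof
    fix a assume "a \<in> S"
    show "a \<in> closure (\<Union>m. K m)" unfolding closure_approachable
    proof (intro allI impI)
      fix e :: real assume "e > 0"
      then obtain m where m: "inverse (real (Suc m)) < e" using reals_Archimedean by blast
      then obtain b where "b \<in> K m" "dist b a < inverse (real (Suc m))"
        using cover[of m] \<open>a \<in> S\<close> by auto
      then show "\<exists>b\<in>\<Union>m. K m. dist b a < e" using m by (meson UN_I UNIV_I less_trans)
    qed
  qed
  moreover have "countable (\<Union>m. K m)" using K(1) by (simp add: countable_finite)
  ultimately show thesis using K(2) that by blast
qed

lemma compact_is_omega_limit:
  fixes A :: "'a::metric_space set"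
  assumes "compact A" "A \<noteq> {}"
  obtains p where "range p \<subseteq> A" "omega_limit p = A"
proof -
  obtain D where D: "countable D" "D \<subseteq> A" "A \<subseteq> closure D"
    using compact_imp_separable[OF assms(1)] by blast
  then have "D \<noteq> {}" using assms(2) by auto
  define p where "p k = from_nat_into D (fst (prod_decode k))" for k
  have "range p \<subseteq> A" unfolding p_def using D(2) from_nat_into[OF \<open>D \<noteq> {}\<close>] by auto
  moreover have "D \<subseteq> omega_limit p"
  proof
    fix d assume "d \<in> D"
    then obtain j where j: "from_nat_into D j = d" using from_nat_into_surj[OF D(1)] by blast
    have "p (prod_encode (j, M)) = d" for M unfolding p_def j[symmetric] by simp
    then show "d \<in> omega_limit p"
      unfolding mem_omega_limit_iff by (metis dist_self le_prod_encode_2)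
  qed
  then have "closure D \<subseteq> omega_limit p"
    by (rule closure_minimal) (simp add: omega_limit_def closed_INT)
  ultimately have "omega_limit p = A"
    using D(3) omega_limit_subset compact_imp_closed[OF assms(1)] by blast
  with \<open>range p \<subseteq> A\<close> show thesis by (rule that)
qed

definition glue_seq :: "(nat \<Rightarrow> 'a) \<Rightarrow> (nat \<Rightarrow> 'a) \<Rightarrow> int \<Rightarrow> 'a" where
  "glue_seq y w i = (if 0 \<le> i then y (nat i) else w (nat (- i)))"

lemma glue_seq_nonneg [simp]: "glue_seq y w (int n) = y n"
  by (simp add: glue_seq_def)

lemma glue_seq_nonpos [simp]: "y 0 = w 0 \<Longrightarrow> glue_seq y w (- int n) = w n"
  by (simp add: glue_seq_def)

lemma filterlim_at_bot_int_iff_nat: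
  "filterlim g F (at_bot :: int filter) \<longleftrightarrow> filterlim (\<lambda>n. g (- int (Suc n))) F sequentially"
proof -
  have "filterlim g F at_bot \<longleftrightarrow> filterlim (\<lambda>i. g (- i)) F (at_top :: int filter)"
    unfolding filterlim_def at_bot_mirror filtermap_filtermap ..
  also have "\<dots> \<longleftrightarrow> filterlim (\<lambda>n. g (- int n)) F sequentially"
    using filterlim_int_of_nat_at_topD[of "\<lambda>i. g (- i)"]
      filterlim_compose[OF _ filterlim_int_sequentially, of "\<lambda>i. g (- i)"] by blast
  also have "\<dots> \<longleftrightarrow> filterlim (\<lambda>n. g (- int (Suc n))) F sequentially"
    by (rule filterlim_sequentially_Suc[symmetric])
  finally show ?thesis .
qed

lemma two_sided_asym_pseudo_orbit_glue_seq:
  fixes y w :: "nat \<Rightarrow> 'a::metric_space"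
  assumes "range y \<subseteq> X" "range w \<subseteq> X" "y 0 = w 0"
    and forward: "(\<lambda>n. dist (f (y n)) (y (Suc n))) \<longlonglongrightarrow> 0"
    and backward: "(\<lambda>n. dist (f (w (Suc n))) (w n)) \<longlonglongrightarrow> 0"
  shows "two_sided_asym_pseudo_orbit X f (glue_seq y w)"
  unfolding two_sided_asym_pseudo_orbit_def
proof (intro conjI allI)
  fix i show "glue_seq y w i \<in> X"
    using assms(1,2) unfolding glue_seq_def by auto
next
  have "glue_seq y w (int n + 1) = y (Suc n)" for n
    using glue_seq_nonneg[of y w "Suc n"] by (simp add: add.commute)
  then have "(\<lambda>n. dist (f (glue_seq y w (int n))) (glue_seq y w (int n + 1))) \<longlonglongrightarrow> 0"
    using forward by simp
  then show "((\<lambda>i. dist (f (glue_seq y w i)) (glue_seq y w (i + 1))) \<longlongrightarrow> 0) at_top"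
    by (rule filterlim_int_of_nat_at_topD)
next
  have "glue_seq y w (- int (Suc n) + 1) = w n" for n
    using glue_seq_nonpos[of y w n] assms(3) by simp
  then show "((\<lambda>i. dist (f (glue_seq y w i)) (glue_seq y w (i + 1))) \<longlongrightarrow> 0) at_bot"
    unfolding filterlim_at_bot_int_iff_nat using backward
    by (simp only: glue_seq_nonpos[of y w, OF assms(3)])
qed

lemma full_trajectory_funpow:
  assumes "full_trajectory X f z"
  shows "(f ^^ n) (z m) = z (m + int n)"
  using assms unfolding full_trajectory_def by (induction n) (simp_all add: ac_simps)

lemma gamma_pt_full_trajectory:
  assumes z: "full_trajectory X f z" and limits: "alpha_seq z = omega_seq z"
  shows "gamma_pt X f (z 0) = omega_seq z"
proof
  have omega: "omega_pt f (z 0) = omega_seq z"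
    by (simp add: omega_pt_eq_omega_limit omega_seq_eq_omega_limit full_trajectory_funpow[OF z])
  then show "gamma_pt X f (z 0) \<subseteq> omega_seq z" unfolding gamma_pt_def by blast
  show "omega_seq z \<subseteq> gamma_pt X f (z 0)"
  proof
    fix a assume a: "a \<in> omega_seq z"
    then have "a \<in> omega_limit (\<lambda>n. z (- int n))"
      using limits by (simp add: alpha_seq_eq_omega_limit)
    then obtain r where r: "strict_mono r" "((\<lambda>n. z (- int n)) \<circ> r) \<longlonglongrightarrow> a"
      by (rule omega_limit_convergent_subseq)
    have "z (- int (r i)) \<in> X \<and> (f ^^ r i) (z (- int (r i))) = z 0" for i
      using z full_trajectory_funpow[OF z] unfolding full_trajectory_def by simp
    with r have "\<exists>ys ns. strict_mono ns \<and> (\<forall>i. ys i \<in> X \<and> (f ^^ ns i) (ys i) = z 0) \<and> ys \<longlonglongrightarrow> a"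
      by (intro exI[of _ "\<lambda>i. z (- int (r i))"] exI[of _ r]) (simp add: o_def)
    then show "a \<in> gamma_pt X f (z 0)"
      unfolding gamma_pt_def using a omega by blast
  qed
qed

lemma ICT_is_limit_set_of_asym_pseudo_orbit:
  assumes "compact X" "A \<in> ICT X f"
  obtains x where "two_sided_asym_pseudo_orbit X f x" "alpha_seq x = A" "omega_seq x = A"
proof -
  have A: "A \<subseteq> X" "A \<noteq> {}" "closed A" and ict: "internally_chain_transitive X f A"
    using assms(2) by (auto simp: ICT_def)
  have "compact A" using compact_Int_closed[OF assms(1) A(3)] A(1) by (simp add: Int_absorb1)
  then obtain p where p: "range p \<subseteq> A" "omega_limit p = A"
    using compact_is_omega_limit A(2) by blast
  have chains: "delta_chain (\<lambda>u v. dist (f u) v) \<delta> A a b" if "a \<in> A" "b \<in> A" "\<delta> > 0" for a b \<delta>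
    using ict that by (simp add: internally_chain_transitive_iff_delta_chain)
  obtain y where y: "range y \<subseteq> A" "y 0 = p 0" "(\<lambda>n. dist (f (y n)) (y (Suc n))) \<longlonglongrightarrow> 0"
    "\<And>k. \<exists>n\<ge>k. y n = p k"
    using asymptotic_chain_visiting[OF chains zero_le_dist p(1)] by blast
  obtain w where w: "range w \<subseteq> A" "w 0 = p 0" "(\<lambda>n. dist (f (w (Suc n))) (w n)) \<longlonglongrightarrow> 0"
    "\<And>k. \<exists>n\<ge>k. w n = p k"
    using asymptotic_chain_visiting[OF delta_chain_reverse[OF chains] zero_le_dist p(1)] by blast
  have "omega_limit y = A" "omega_limit w = A"
    using omega_limit_subset[OF y(1) A(3)] omega_limit_subset_if_visits[OF y(4)]
      omega_limit_subset[OF w(1) A(3)] omega_limit_subset_if_visits[OF w(4)] p(2) by auto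
  moreover have "two_sided_asym_pseudo_orbit X f (glue_seq y w)"
    using y w A(1) by (intro two_sided_asym_pseudo_orbit_glue_seq) auto
  ultimately show thesis
    using that y(2) w(2) by (simp add: alpha_seq_eq_omega_limit omega_seq_eq_omega_limit)
qed

theorem mainTheorem4:
  fixes X :: "'a::metric_space set" and f :: "'a \<Rightarrow> 'a"
  assumes "compact X"
    and "continuous_on X f"
    and "f ` X \<subseteq> X"
    and "gamma_restricted_two_sided_orbital_limit_shadowing X f"
  shows "ICT X f \<subseteq> gamma_sets X f"
proof
  fix A assume "A \<in> ICT X f"
  then obtain x where "two_sided_asym_pseudo_orbit X f x" "alpha_seq x = A" "omega_seq x = A"
    using ICT_is_limit_set_of_asym_pseudo_orbit[OF assms(1)] by blast
  then obtain z where z: "full_trajectory X f z" "alpha_seq z = A" "omega_seq z = A"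
    using assms(4) unfolding gamma_restricted_two_sided_orbital_limit_shadowing_def by metis
  then have "gamma_pt X f (z 0) = A" using gamma_pt_full_trajectory by metis
  moreover have "z 0 \<in> X" using z(1) unfolding full_trajectory_def by blast
  ultimately show "A \<in> gamma_sets X f" unfolding gamma_sets_def by blast
qed

end
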